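(* Let $G$ be a modular noetherian right $\ell$-group with strong order unit $s$ and degree homomorphism $\deg$. For $g \in G^-$, the sequence \[ \iota_i(g) := \deg(g \vee s^{-i}) - \deg(g \vee s^{-(i-1)}) \qquad (i \geq 1) \] is non-increasing.
   Context: A right $\ell$-group is a group $G$ (identity $e$) with a right-invariant partial order making $G$ a lattice. It is modular if the lattice is modular. It is noetherian if for each $g$ the set $\{h \geq g\}$ satisfies the descending chain condition and the set $\{h \leq g\}$ satisfies the ascending chain condition. $G^- = \{g \leq e\}$. A strong order unit is an element $s > e$ such that $x \mapsto sx$ is a lattice automorphism of $G$ and every $g$ satisfies $g \leq s^k$ for some $k \in \mathbb{Z}$. The degree homomorphism $\deg : G \to \mathbb{Z}$ is the unique group homomorphism sending each $g \in G^-$ to the (well-defined) number of factors in any factorization of $g$ into elements covered by $e$. *)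

theory Defs
  imports "HOL-Algebra.Group"
begin

definition right_l_group :: "('a::lattice) monoid \<Rightarrow> bool" where
  "right_l_group G \<longleftrightarrow> group G \<and> carrier G = UNIV \<and>
     (\<forall>x y z. x \<le> y \<longrightarrow> x \<otimes>\<^bsub>G\<^esub> z \<le> y \<otimes>\<^bsub>G\<^esub> z)"

definition modular_lattice :: "('a::lattice) itself \<Rightarrow> bool" where
  "modular_lattice _ \<longleftrightarrow> (\<forall>x y z::'a. x \<le> z \<longrightarrow> sup x (inf y z) = inf (sup x y) z)"

definition dcc_on :: "('a::order) set \<Rightarrow> bool" where
  "dcc_on S \<longleftrightarrow> \<not> (\<exists>f::nat \<Rightarrow> 'a. (\<forall>n. f n \<in> S) \<and> (\<forall>n. f (Suc n) < f n))"

definition acc_on :: "('a::order) set \<Rightarrow> bool" where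
  "acc_on S \<longleftrightarrow> \<not> (\<exists>f::nat \<Rightarrow> 'a. (\<forall>n. f n \<in> S) \<and> (\<forall>n. f n < f (Suc n)))"

definition noetherian :: "('a::order) itself \<Rightarrow> bool" where
  "noetherian _ \<longleftrightarrow> (\<forall>g::'a. dcc_on {h. g \<le> h} \<and> acc_on {h. h \<le> g})"

definition strong_order_unit :: "('a::lattice) monoid \<Rightarrow> 'a \<Rightarrow> bool" where
  "strong_order_unit G s \<longleftrightarrow> \<one>\<^bsub>G\<^esub> < s \<and>
     bij (\<lambda>x. s \<otimes>\<^bsub>G\<^esub> x) \<and>
     (\<forall>x y. (s \<otimes>\<^bsub>G\<^esub> x \<le> s \<otimes>\<^bsub>G\<^esub> y) \<longleftrightarrow> x \<le> y) \<and>
     (\<forall>g. \<exists>k::int. g \<le> s [^]\<^bsub>G\<^esub> k)"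

definition covered_by_one :: "('a::order) monoid \<Rightarrow> 'a \<Rightarrow> bool" where
  "covered_by_one G a \<longleftrightarrow> a < \<one>\<^bsub>G\<^esub> \<and> \<not> (\<exists>c. a < c \<and> c < \<one>\<^bsub>G\<^esub>)"

definition degree_hom :: "('a::order) monoid \<Rightarrow> ('a \<Rightarrow> int) \<Rightarrow> bool" where
  "degree_hom G deg \<longleftrightarrow>
     (\<forall>x y. deg (x \<otimes>\<^bsub>G\<^esub> y) = deg x + deg y) \<and>
     (\<forall>g xs. g \<le> \<one>\<^bsub>G\<^esub> \<longrightarrow> (\<forall>a\<in>set xs. covered_by_one G a) \<longrightarrow>
        foldr (\<lambda>a b. a \<otimes>\<^bsub>G\<^esub> b) xs \<one>\<^bsub>G\<^esub> = g \<longrightarrow> deg g = int (length xs))"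

definition iota :: "('a::lattice) monoid \<Rightarrow> ('a \<Rightarrow> int) \<Rightarrow> 'a \<Rightarrow> 'a \<Rightarrow> nat \<Rightarrow> int" where
  "iota G deg s g i = deg (sup g (s [^]\<^bsub>G\<^esub> (- int i))) - deg (sup g (s [^]\<^bsub>G\<^esub> (- (int i - 1))))"

end

theory Submission
  imports Defs
begin

(*
  Every cover in G is the right translate of an element covered by the identity, so deg drops
  by exactly one along covers, and by noetherianity comparable elements are joined by finite
  chains of covers. In a modular lattice covers transpose under joins, which makes deg a
  valuation: deg (x \<sqinter> y) + deg (x \<squnion> y) = deg x + deg y. Hence the increment
  deg b - deg (b \<squnion> t) is antitone in b. Left multiplication by s is a lattice automorphism
  shifting deg by the constant deg s; it maps g \<squnion> s^(m-1) to sg \<squnion> s^m, which lies above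
  g \<squnion> s^m, and g \<squnion> s^m to (sg \<squnion> s^m) \<squnion> s^(m+1). Comparing the increments of sg \<squnion> s^m
  and g \<squnion> s^m with t = s^(m+1) therefore compares two consecutive values of iota.
*)

definition covered_by :: "'a::order \<Rightarrow> 'a \<Rightarrow> bool" where
  "covered_by a b \<longleftrightarrow> a < b \<and> \<not> (\<exists>c. a < c \<and> c < b)"

lemma acc_on_exists_covered_by:
  fixes u w :: "'a::order"
  assumes "acc_on {h. h \<le> w}" and "u < w"
  shows "\<exists>z. u \<le> z \<and> covered_by z w"
proof -
  define r where "r = {(y, x). x \<le> w \<and> y \<le> w \<and> x < y}"
  have "wf r"
    using assms(1) unfolding r_def acc_on_def wf_iff_no_infinite_down_chain by auto
  moreover have "u \<in> {h. u \<le> h \<and> h < w}"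
    using assms(2) by simp
  ultimately obtain z where z: "u \<le> z" "z < w"
    and maximal: "\<And>y. (y, z) \<in> r \<Longrightarrow> y \<notin> {h. u \<le> h \<and> h < w}"
    by (metis (no_types, lifting) mem_Collect_eq wfE_min)
  have "covered_by z w"
    unfolding covered_by_def
  proof (intro conjI notI)
    assume "\<exists>c. z < c \<and> c < w"
    then obtain c where "z < c" "c < w" by blast
    moreover from \<open>u \<le> z\<close> \<open>z < c\<close> have "u \<le> c" by simp
    ultimately show False using maximal[of c] \<open>z < w\<close> unfolding r_def by (simp add: less_imp_le)
  qed (fact \<open>z < w\<close>)
  with z show ?thesis by blast
qed

lemma noetherian_cover_induct:
  fixes u w :: "'a::order"
  assumes "noetherian TYPE('a)" and "u \<le> w" and "P u"
    and cover: "\<And>z w. u \<le> z \<Longrightarrow> covered_by z w \<Longrightarrow> P z \<Longrightarrow> P w"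
  shows "P w"
proof -
  have "wf {(y, x). u \<le> x \<and> u \<le> y \<and> y < x}"
    using assms(1) unfolding noetherian_def dcc_on_def wf_iff_no_infinite_down_chain by auto
  then have "u \<le> w \<longrightarrow> P w"
  proof (induction w rule: wf_induct_rule)
    case (less w)
    show ?case
    proof (intro impI)
      assume "u \<le> w"
      show "P w"
      proof (cases "u = w")
        case True
        with \<open>P u\<close> show ?thesis by simp
      next
        case False
        with \<open>u \<le> w\<close> have "u < w" by simp
        then obtain z where "u \<le> z" "covered_by z w"
          using acc_on_exists_covered_by[of w u] assms(1) unfolding noetherian_def by blast
        with less.IH cover show ?thesis
          unfolding covered_by_def by auto
      qed
    qed
  qed
  with assms(2) show ?thesis by blast
qed

lemma modular_covered_by_sup:
  fixes x z w :: "'a::lattice"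
  assumes modular: "modular_lattice TYPE('a)"
    and zw: "covered_by z w" and below: "inf x w \<le> z"
  shows "covered_by (sup x z) (sup x w)"
proof -
  have mod: "\<And>a b c::'a. a \<le> c \<Longrightarrow> sup a (inf b c) = inf (sup a b) c"
    using modular unfolding modular_lattice_def by blast
  have "z < w" using zw unfolding covered_by_def by blast
  have "inf (sup x z) w = z"
    using mod[of z w x] \<open>z < w\<close> below by (simp add: sup_absorb1 sup_commute)
  then have "sup x z \<noteq> sup x w"
    using \<open>z < w\<close> by (metis inf_absorb2 sup.cobounded2 order.irrefl)
  then have strict: "sup x z < sup x w"
    using \<open>z < w\<close> by (simp add: le_supI2 order_less_le sup.coboundedI2)
  have "False" if d: "sup x z < d" "d < sup x w" for d
  proof -
    have "sup (sup x z) (inf w d) = inf (sup (sup x z) w) d"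
      using less_imp_le[OF d(1)] by (rule mod)
    also have "\<dots> = d"
      using \<open>z < w\<close> d(2) by (simp add: sup.absorb2 sup_assoc inf_absorb2)
    finally have d_eq: "d = sup (sup x z) (inf w d)" ..
    have "z \<le> inf w d"
      using \<open>z < w\<close> d(1) by (meson le_inf_iff less_imp_le sup.cobounded2 order_trans)
    moreover have "inf w d \<noteq> z"
      using d_eq d(1) by (auto simp: sup_absorb1)
    moreover have "inf w d \<noteq> w"
      using d by (metis inf.cobounded2 le_sup_iff less_imp_le leD)
    ultimately have "z < inf w d" "inf w d < w"
      by (simp_all add: order_less_le)
    with zw show False unfolding covered_by_def by blast
  qed
  with strict show ?thesis unfolding covered_by_def by blast
qed

locale graded_noetherian =
  fixes rk :: "'a::order \<Rightarrow> int"
  assumes noetherian: "noetherian TYPE('a)"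
    and rk_covered_by: "covered_by a b \<Longrightarrow> rk a = rk b + 1"
begin

lemma rk_antimono: "u \<le> w \<Longrightarrow> rk w \<le> rk u"
  by (rule noetherian_cover_induct[OF noetherian, where P = "\<lambda>w. rk w \<le> rk u"])
    (auto dest: rk_covered_by)

end

locale modular_graded_noetherian = graded_noetherian rk
  for rk :: "'a::lattice \<Rightarrow> int" +
  assumes modular: "modular_lattice TYPE('a)"
begin

lemma rk_inf_sup: "rk (inf x y) + rk (sup x y) = rk x + rk y"
proof -
  have "w \<le> y \<longrightarrow> rk (inf x y) + rk (sup x w) = rk x + rk w" if "inf x y \<le> w" for w
  proof (rule noetherian_cover_induct[OF noetherian that,
        where P = "\<lambda>w. w \<le> y \<longrightarrow> rk (inf x y) + rk (sup x w) = rk x + rk w"])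
    show "inf x y \<le> y \<longrightarrow> rk (inf x y) + rk (sup x (inf x y)) = rk x + rk (inf x y)"
      by (simp add: sup_absorb1)
  next
    fix z w
    assume "inf x y \<le> z" and zw: "covered_by z w"
      and IH: "z \<le> y \<longrightarrow> rk (inf x y) + rk (sup x z) = rk x + rk z"
    show "w \<le> y \<longrightarrow> rk (inf x y) + rk (sup x w) = rk x + rk w"
    proof
      assume "w \<le> y"
      then have "z \<le> y" using zw unfolding covered_by_def by (meson less_imp_le order_trans)
      have "inf x w \<le> z"
        using \<open>inf x y \<le> z\<close> \<open>w \<le> y\<close> by (meson inf_mono order_refl order_trans)
      then have "rk (sup x z) = rk (sup x w) + 1"
        using modular_covered_by_sup[OF modular zw] rk_covered_by by blast
      with rk_covered_by[OF zw] IH \<open>z \<le> y\<close> show "rk (inf x y) + rk (sup x w) = rk x + rk w"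
        by simp
    qed
  qed
  then show ?thesis by simp
qed

lemma rk_sup_increment_antimono:
  assumes "b \<le> x"
  shows "rk x - rk (sup x t) \<le> rk b - rk (sup b t)"
proof -
  have "inf b t \<le> inf x t" using assms by (simp add: le_infI1)
  then have "rk (inf x t) \<le> rk (inf b t)" by (rule rk_antimono)
  then show ?thesis using rk_inf_sup[of x t] rk_inf_sup[of b t] by simp
qed

end

locale modular_noetherian_right_l_group = group G
  for G :: "('a::lattice) monoid" (structure) +
  fixes s :: 'a and deg :: "'a \<Rightarrow> int"
  assumes right_l_group: "right_l_group G"
    and modular: "modular_lattice TYPE('a)"
    and noetherian: "noetherian TYPE('a)"
    and strong_order_unit: "strong_order_unit G s"
    and degree_hom: "degree_hom G deg"
begin

lemma carrier_UNIV [simp]: "x \<in> carrier G"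
  using right_l_group unfolding right_l_group_def by auto

lemma mult_right_mono: "x \<le> y \<Longrightarrow> x \<otimes> z \<le> y \<otimes> z"
  using right_l_group unfolding right_l_group_def by auto

lemma mult_right_le_iff: "x \<otimes> z \<le> y \<otimes> z \<longleftrightarrow> x \<le> y"
  by (metis carrier_UNIV mult_right_mono r_inv m_assoc r_one)

lemma mult_right_less_iff: "x \<otimes> z < y \<otimes> z \<longleftrightarrow> x < y"
  by (simp add: less_le_not_le mult_right_le_iff)

lemma covered_by_mult_right_iff: "covered_by (a \<otimes> z) (b \<otimes> z) \<longleftrightarrow> covered_by a b"
proof -
  have "(\<exists>c. a \<otimes> z < c \<and> c < b \<otimes> z) \<longleftrightarrow> (\<exists>c. a < c \<and> c < b)"
    by (metis carrier_UNIV mult_right_less_iff r_inv m_assoc r_one)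
  then show ?thesis unfolding covered_by_def by (simp add: mult_right_less_iff)
qed

lemma deg_mult: "deg (x \<otimes> y) = deg x + deg y"
  using degree_hom unfolding degree_hom_def by blast

lemma deg_covered_by_one:
  assumes "covered_by c \<one>"
  shows "deg c = 1"
proof -
  have "c \<le> \<one>" "covered_by_one G c"
    using assms unfolding covered_by_def covered_by_one_def by auto
  moreover have "foldr (\<lambda>a b. a \<otimes> b) [c] \<one> = c" by simp
  ultimately have "deg c = int (length [c])"
    using degree_hom unfolding degree_hom_def by (metis empty_iff empty_set set_ConsD)
  then show ?thesis by simp
qed

lemma deg_covered_by:
  assumes "covered_by a b"
  shows "deg a = deg b + 1"
proof -
  have "covered_by (a \<otimes> inv b) \<one>"
    using assms covered_by_mult_right_iff[of a "inv b" b] by simp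
  then have "deg (a \<otimes> inv b) = 1" by (rule deg_covered_by_one)
  then show ?thesis using deg_mult[of "a \<otimes> inv b" b] by (simp add: m_assoc)
qed

sublocale modular_graded_noetherian deg
  using noetherian modular deg_covered_by by unfold_locales

lemma le_unit_mult: "x \<le> s \<otimes> x"
proof -
  have "\<one> \<le> s"
    using strong_order_unit unfolding strong_order_unit_def by (simp add: order_less_imp_le)
  then show ?thesis using mult_right_mono[of \<one> s x] by simp
qed

lemma unit_mult_sup: "s \<otimes> sup a b = sup (s \<otimes> a) (s \<otimes> b)"
proof -
  have emb: "\<And>x y. s \<otimes> x \<le> s \<otimes> y \<longleftrightarrow> x \<le> y" and "surj (\<lambda>x. s \<otimes> x)"
    using strong_order_unit unfolding strong_order_unit_def by (blast dest: bij_is_surj)+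
  then obtain c where c: "sup (s \<otimes> a) (s \<otimes> b) = s \<otimes> c" by (metis surjD)
  have "a \<le> c" "b \<le> c" using c emb by (metis sup_ge1 sup_ge2)+
  then have "s \<otimes> sup a b \<le> s \<otimes> c" using emb by simp
  moreover have "sup (s \<otimes> a) (s \<otimes> b) \<le> s \<otimes> sup a b" using emb by simp
  ultimately show ?thesis using c by simp
qed

lemma unit_mult_int_pow: "s \<otimes> s [^] (n::int) = s [^] (n + 1)"
  by (simp add: int_pow_mult add.commute[of n 1])

lemma sup_int_pow_increment_antimono:
  fixes m :: int
  shows "deg (sup g (s [^] (m - 1))) - deg (sup g (s [^] m))
    \<le> deg (sup g (s [^] m)) - deg (sup g (s [^] (m + 1)))"
proof -
  define t where "t = s [^] (m + 1)"
  define x where "x = sup (s \<otimes> g) (s [^] m)"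
  have "s [^] m \<le> t"
    unfolding t_def using le_unit_mult[of "s [^] m"] unit_mult_int_pow[of m] by simp
  then have absorb: "sup (sup y (s [^] m)) t = sup y t" for y
    by (simp add: sup_assoc sup.absorb2)
  have "s \<otimes> sup g (s [^] (m - 1)) = x"
    unfolding x_def using unit_mult_sup unit_mult_int_pow[of "m - 1"] by simp
  moreover have "s \<otimes> sup g (s [^] m) = sup x t"
    unfolding x_def t_def using unit_mult_sup unit_mult_int_pow[of m] absorb t_def by simp
  ultimately have "deg (sup g (s [^] (m - 1))) - deg (sup g (s [^] m)) = deg x - deg (sup x t)"
    by (metis deg_mult add_diff_cancel_left)
  also have "\<dots> \<le> deg (sup g (s [^] m)) - deg (sup (sup g (s [^] m)) t)"
    unfolding x_def using le_unit_mult[of g]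
    by (intro rk_sup_increment_antimono) (meson order_refl sup_mono)
  finally show ?thesis using absorb t_def by simp
qed

lemma iota_Suc_le: "iota G deg s g (Suc k) \<le> iota G deg s g k"
proof -
  have shift: "- int (Suc k) = - int k - 1" "- (int (Suc k) - 1) = - int k"
    "- (int k - 1) = - int k + 1"
    by simp_all
  show ?thesis
    unfolding iota_def shift using sup_int_pow_increment_antimono[of g "- int k"] by linarith
qed

end

theorem mainTheorem5:
  fixes G :: "('a::lattice) monoid" and s :: 'a and deg :: "'a \<Rightarrow> int"
  assumes "right_l_group G"
    and "modular_lattice TYPE('a)"
    and "noetherian TYPE('a)"
    and "strong_order_unit G s"
    and "degree_hom G deg"
    and "g \<le> \<one>\<^bsub>G\<^esub>"
    and "1 \<le> i" and "i \<le> j"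
  shows "iota G deg s g j \<le> iota G deg s g i"
proof -
  have "group G" using assms(1) unfolding right_l_group_def by blast
  then interpret modular_noetherian_right_l_group G s deg
    by (intro modular_noetherian_right_l_group.intro
        modular_noetherian_right_l_group_axioms.intro assms(1-5))
  have "antimono (iota G deg s g)"
    by (simp add: antimono_iff_le_Suc iota_Suc_le)
  from this \<open>i \<le> j\<close> show ?thesis by (rule antimonoD)
qed

end
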